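(* For every $A\subseteq[n]$, with $$C_A=\sum_{\{i,j\}\subseteq A}\Gamma_{\{i,j\}}\Gamma_{A\setminus\{i,j\}}-(|A|-2)\sum_{i\in A}\mu_i\,\Gamma_{A\setminus\{i\}}$$ (first sum over the 2-element subsets of $A$), one has $$C_A=\frac{|A|(|A|-3)}{4}\,\Gamma_A .$$
   Context: Fix $n\ge1$ and real parameters $\mu_1,\dots,\mu_n>0$; write $[n]=\{1,\dots,n\}$. For $i\in[n]$, $r_i$ is the reflection $(r_if)(x)=f(x_1,\dots,-x_i,\dots,x_n)$ and $T_i=\partial_{x_i}+\frac{\mu_i}{x_i}(1-r_i)$. $\mathcal{C}\ell_n$ is generated by $e_1,\dots,e_n$ with $e_ie_j+e_je_i=-2\delta_{ij}$, $V$ is a fixed left $\mathcal{C}\ell_n$-module, and operators act on $\mathcal{P}(\mathbb{R}^n)\otimes V$ with $x_i,T_i,r_i$ acting on the polynomial factor and $e_i$ on $V$. For $A\subseteq[n]$: $\underline{D}_A=\sum_{i\in A}e_iT_i$, $\underline{x}_A=\sum_{i\in A}e_ix_i$, $\underline{S}_A=\frac12([\underline{x}_A,\underline{D}_A]-1)$, $\Gamma_A=\underline{S}_A\prod_{i\in A}r_i$ (empty sums $0$, empty products $1$). *)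

theory Defs
  imports Complex_Main
begin

text \<open>Elements of P(R^n) tensor V are represented as V-valued polynomials, i.e. by their
coefficient maps: a multi-index alpha :: nat => nat (only coordinates 1..n used) is mapped
to the V-coefficient of x^alpha.\<close>

type_synonym 'v pol = "(nat \<Rightarrow> nat) \<Rightarrow> 'v"

definition is_pol :: "nat \<Rightarrow> 'v::zero pol \<Rightarrow> bool" where
  "is_pol n F \<longleftrightarrow> finite {\<alpha>. F \<alpha> \<noteq> 0} \<and>
     (\<forall>\<alpha>. F \<alpha> \<noteq> 0 \<longrightarrow> (\<forall>k. k \<notin> {1..n} \<longrightarrow> \<alpha> k = 0))"

definition xop :: "nat \<Rightarrow> 'v::zero pol \<Rightarrow> 'v pol" where
  "xop i F = (\<lambda>\<alpha>. if \<alpha> i = 0 then 0 else F (\<alpha>(i := \<alpha> i - 1)))"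

definition dop :: "nat \<Rightarrow> 'v::real_vector pol \<Rightarrow> 'v pol" where
  "dop i F = (\<lambda>\<alpha>. real (Suc (\<alpha> i)) *\<^sub>R F (\<alpha>(i := Suc (\<alpha> i))))"

definition rop :: "nat \<Rightarrow> 'v::real_vector pol \<Rightarrow> 'v pol" where
  "rop i F = (\<lambda>\<alpha>. ((-1::real) ^ (\<alpha> i)) *\<^sub>R F \<alpha>)"

text \<open>division by x_i (applied only to polynomials divisible by x_i)\<close>
definition divx :: "nat \<Rightarrow> 'v pol \<Rightarrow> 'v pol" where
  "divx i G = (\<lambda>\<alpha>. G (\<alpha>(i := Suc (\<alpha> i))))"

definition Top :: "(nat \<Rightarrow> real) \<Rightarrow> nat \<Rightarrow> 'v::real_vector pol \<Rightarrow> 'v pol" where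
  "Top \<mu> i F = (\<lambda>\<alpha>. dop i F \<alpha> + \<mu> i *\<^sub>R divx i (\<lambda>\<beta>. F \<beta> - rop i F \<beta>) \<alpha>)"

definition cop :: "(nat \<Rightarrow> 'v \<Rightarrow> 'v) \<Rightarrow> nat \<Rightarrow> 'v pol \<Rightarrow> 'v pol" where
  "cop e i F = (\<lambda>\<alpha>. e i (F \<alpha>))"

definition DA :: "(nat \<Rightarrow> 'v \<Rightarrow> 'v) \<Rightarrow> (nat \<Rightarrow> real) \<Rightarrow> nat set \<Rightarrow> 'v::real_vector pol \<Rightarrow> 'v pol" where
  "DA e \<mu> A F = (\<lambda>\<alpha>. \<Sum>i\<in>A. cop e i (Top \<mu> i F) \<alpha>)"

definition XA :: "(nat \<Rightarrow> 'v \<Rightarrow> 'v) \<Rightarrow> nat set \<Rightarrow> 'v::real_vector pol \<Rightarrow> 'v pol" where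
  "XA e A F = (\<lambda>\<alpha>. \<Sum>i\<in>A. cop e i (xop i F) \<alpha>)"

definition SA :: "(nat \<Rightarrow> 'v \<Rightarrow> 'v) \<Rightarrow> (nat \<Rightarrow> real) \<Rightarrow> nat set \<Rightarrow> 'v::real_vector pol \<Rightarrow> 'v pol" where
  "SA e \<mu> A F = (\<lambda>\<alpha>. (1/2::real) *\<^sub>R
      (XA e A (DA e \<mu> A F) \<alpha> - DA e \<mu> A (XA e A F) \<alpha> - F \<alpha>))"

definition rprod :: "nat set \<Rightarrow> 'v::real_vector pol \<Rightarrow> 'v pol" where
  "rprod A F = (\<lambda>\<alpha>. (\<Prod>i\<in>A. (-1::real) ^ (\<alpha> i)) *\<^sub>R F \<alpha>)"

definition GammaA :: "(nat \<Rightarrow> 'v \<Rightarrow> 'v) \<Rightarrow> (nat \<Rightarrow> real) \<Rightarrow> nat set \<Rightarrow> 'v::real_vector pol \<Rightarrow> 'v pol" where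
  "GammaA e \<mu> A F = SA e \<mu> A (rprod A F)"

definition CA :: "(nat \<Rightarrow> 'v \<Rightarrow> 'v) \<Rightarrow> (nat \<Rightarrow> real) \<Rightarrow> nat set \<Rightarrow> 'v::real_vector pol \<Rightarrow> 'v pol" where
  "CA e \<mu> A F = (\<lambda>\<alpha>.
     (\<Sum>P\<in>{P. P \<subseteq> A \<and> card P = 2}. GammaA e \<mu> P (GammaA e \<mu> (A - P) F) \<alpha>)
     - (real (card A) - 2) *\<^sub>R (\<Sum>i\<in>A. \<mu> i *\<^sub>R GammaA e \<mu> (A - {i}) F \<alpha>))"

end

theory Submission
  imports Defs "HOL-Library.Function_Algebras"
begin

text \<open>Expanding the commutator with \<open>[T_i, x_i] = 1 + 2 \<mu>_i r_i\<close>, \<open>e_i^2 = -1\<close> and the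
  anticommutation of distinct \<open>e_i\<close> gives
  \<open>S_B = \<Sum>_{i \<noteq> j \<in> B} e_i e_j x_i T_j + (|B| - 1)/2 + \<Sum>_{i \<in> B} \<mu>_i r_i\<close>.
  A reflection \<open>r_k\<close> commutes with every \<open>e_i\<close> and with \<open>x_i\<close>, \<open>T_i\<close> for \<open>i \<noteq> k\<close>, so
  \<open>\<Gamma>_P \<Gamma>_(A-P) = S_P S_(A-P) r_A\<close> and \<open>\<Gamma>_(A-{i}) = S_(A-{i}) r_i r_A\<close>, and the claim
  becomes an identity between the \<open>S_B\<close>. Inserting the decomposition, every term becomes a
  sum over tuples of distinct indices of \<open>A\<close>; after reindexing, both sides are combinations
  of five fixed operators, the quartic angular terms cancel by anticommutation, and the
  coefficients agree.\<close>

section \<open>Operators on vector-valued polynomials\<close>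

instantiation "fun" :: (type, real_vector) real_vector
begin
definition scaleR_fun_def: "c *\<^sub>R f = (\<lambda>x. c *\<^sub>R f x)"
instance by standard (auto simp: scaleR_fun_def fun_eq_iff scaleR_add_right scaleR_add_left)
end

lemma scaleR_fun_apply [simp]: "(c *\<^sub>R f) x = c *\<^sub>R f x"
  by (simp add: scaleR_fun_def)

lemma sum_fun_apply [simp]: "(\<Sum>i\<in>I. f i) x = (\<Sum>i\<in>I. f i x)"
  by (induction I rule: infinite_finite_induct) auto

lemma linear_xop: "linear (xop i :: 'v::real_vector pol \<Rightarrow> _)"
  by (rule linearI) (auto simp: xop_def fun_eq_iff)

lemma linear_rop: "linear (rop i :: 'v::real_vector pol \<Rightarrow> _)"
  by (rule linearI) (auto simp: rop_def fun_eq_iff scaleR_add_right)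

lemma linear_Top: "linear (Top \<mu> i :: 'v::real_vector pol \<Rightarrow> _)"
  by (rule linearI) (auto simp: Top_def dop_def divx_def rop_def fun_eq_iff algebra_simps)

lemma linear_rprod: "linear (rprod A :: 'v::real_vector pol \<Rightarrow> _)"
  by (rule linearI) (auto simp: rprod_def fun_eq_iff algebra_simps)

lemma linear_cop: "linear (e i) \<Longrightarrow> linear (cop e i)"
  by (rule linearI) (auto simp: cop_def fun_eq_iff linear_add linear_scale)

lemma Top_xop_commutator: "Top \<mu> i (xop i F) - xop i (Top \<mu> i F) = F + (2 * \<mu> i) *\<^sub>R rop i F"
proof (rule ext)
  fix \<alpha> :: "nat \<Rightarrow> nat"
  show "(Top \<mu> i (xop i F) - xop i (Top \<mu> i F)) \<alpha> = (F + (2 * \<mu> i) *\<^sub>R rop i F) \<alpha>"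
  proof (cases "\<alpha> i")
    case 0
    then show ?thesis
      by (simp add: Top_def xop_def dop_def divx_def rop_def algebra_simps flip: scaleR_add_left)
        (simp add: scaleR_add_left)
  next
    case (Suc k)
    then have "\<alpha>(i := Suc k) = \<alpha>" by auto
    with Suc show ?thesis
      by (simp add: Top_def xop_def dop_def divx_def rop_def algebra_simps scaleR_2 flip: scaleR_scaleR)
  qed
qed

lemma xop_commute: "xop i (xop j F) = xop j (xop i F)"
  by (cases "i = j") (auto simp: xop_def fun_eq_iff fun_upd_twist)

lemma xop_Top_commute: "i \<noteq> j \<Longrightarrow> xop i (Top \<mu> j F) = Top \<mu> j (xop i F)"
  by (auto simp: xop_def Top_def dop_def divx_def rop_def fun_eq_iff fun_upd_twist)

lemma rop_commute: "rop i (rop j F) = rop j (rop i F)"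
  by (auto simp: rop_def fun_eq_iff)

lemma rop_xop_commute: "i \<noteq> j \<Longrightarrow> rop i (xop j F) = xop j (rop i F)"
  by (auto simp: xop_def rop_def fun_eq_iff)

lemma rop_Top_commute: "i \<noteq> j \<Longrightarrow> rop i (Top \<mu> j F) = Top \<mu> j (rop i F)"
  by (auto simp: Top_def dop_def divx_def rop_def fun_eq_iff algebra_simps)

lemma cop_xop_commute: "linear (e k) \<Longrightarrow> cop e k (xop i F) = xop i (cop e k F)"
  by (auto simp: xop_def cop_def fun_eq_iff linear_0)

lemma cop_Top_commute: "linear (e k) \<Longrightarrow> cop e k (Top \<mu> i F) = Top \<mu> i (cop e k F)"
  by (auto simp: Top_def dop_def divx_def rop_def cop_def fun_eq_iff linear_add linear_scale linear_diff)

lemma cop_rop_commute: "linear (e k) \<Longrightarrow> cop e k (rop i F) = rop i (cop e k F)"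
  by (auto simp: rop_def cop_def fun_eq_iff linear_scale)

lemma cop_rprod_commute: "linear (e k) \<Longrightarrow> cop e k (rprod P F) = rprod P (cop e k F)"
  by (auto simp: rprod_def cop_def fun_eq_iff linear_scale)

lemma rprod_xop_commute: "k \<notin> P \<Longrightarrow> rprod P (xop k F) = xop k (rprod P F)"
  by (auto simp: xop_def rprod_def fun_eq_iff intro!: prod.cong)

lemma rprod_Top_commute: "k \<notin> P \<Longrightarrow> rprod P (Top \<mu> k F) = Top \<mu> k (rprod P F)"
proof -
  assume k: "k \<notin> P"
  have "(\<Prod>i\<in>P. (-1::real) ^ (if i = k then a else \<alpha> i)) = (\<Prod>i\<in>P. (-1) ^ \<alpha> i)" for a \<alpha>
    using k by (intro prod.cong) auto
  then show ?thesis
    by (auto simp: Top_def dop_def divx_def rop_def rprod_def fun_eq_iff algebra_simps)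
qed

lemma rprod_union:
  "finite P \<Longrightarrow> finite B \<Longrightarrow> P \<inter> B = {} \<Longrightarrow> rprod P (rprod B F) = rprod (P \<union> B) F"
  by (auto simp: rprod_def fun_eq_iff prod.union_disjoint)

lemma rprod_Diff_singleton: "finite A \<Longrightarrow> i \<in> A \<Longrightarrow> rprod (A - {i}) F = rop i (rprod A F)"
  by (auto simp: rprod_def rop_def fun_eq_iff prod.remove power_mult_distrib[symmetric])

section \<open>Sums over tuples of distinct indices\<close>

definition distinct_triples :: "'a set \<Rightarrow> ('a \<times> 'a \<times> 'a) set" where
  "distinct_triples A = {(i,j,k). i\<in>A \<and> j\<in>A \<and> k\<in>A \<and> i\<noteq>j \<and> i\<noteq>k \<and> j\<noteq>k}"

definition distinct_quadruples :: "'a set \<Rightarrow> ('a \<times> 'a \<times> 'a \<times> 'a) set" where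
  "distinct_quadruples A = {(i,j,k,l). i\<in>A \<and> j\<in>A \<and> k\<in>A \<and> l\<in>A \<and>
     i\<noteq>j \<and> i\<noteq>k \<and> j\<noteq>k \<and> i\<noteq>l \<and> j\<noteq>l \<and> k\<noteq>l}"

lemma sum_distinct_pairs_swap:
  "finite A \<Longrightarrow> (\<Sum>i\<in>A. \<Sum>j\<in>A-{i}. f i j) = (\<Sum>i\<in>A. \<Sum>j\<in>A-{i}. f j i)"
proof -
  assume A: "finite A"
  have "(\<Sum>i\<in>A. \<Sum>j\<in>A-{i}. f i j) = (\<Sum>(i,j)\<in>Sigma A (\<lambda>i. A-{i}). f i j)"
    using A by (subst sum.Sigma) auto
  also have "\<dots> = (\<Sum>(i,j)\<in>Sigma A (\<lambda>i. A-{i}). f j i)"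
    by (rule sum.reindex_bij_witness[where i="\<lambda>(i,j). (j,i)" and j="\<lambda>(i,j). (j,i)"]) auto
  also have "\<dots> = (\<Sum>i\<in>A. \<Sum>j\<in>A-{i}. f j i)"
    using A by (subst sum.Sigma) auto
  finally show ?thesis .
qed

lemma sum_distinct_triples:
  "finite A \<Longrightarrow> (\<Sum>i\<in>A. \<Sum>j\<in>A-{i}. \<Sum>k\<in>A-{i}-{j}. f i j k) = (\<Sum>(i,j,k)\<in>distinct_triples A. f i j k)"
proof -
  assume A: "finite A"
  have "(\<Sum>i\<in>A. \<Sum>j\<in>A-{i}. \<Sum>k\<in>A-{i}-{j}. f i j k)
      = (\<Sum>i\<in>A. \<Sum>(j,k)\<in>Sigma (A-{i}) (\<lambda>j. A-{i}-{j}). f i j k)"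
    using A by (intro sum.cong refl, subst sum.Sigma) auto
  also have "\<dots> = (\<Sum>(i,jk)\<in>Sigma A (\<lambda>i. Sigma (A-{i}) (\<lambda>j. A-{i}-{j})). case jk of (j,k) \<Rightarrow> f i j k)"
    using A by (subst sum.Sigma) (auto simp: case_prod_beta)
  also have "Sigma A (\<lambda>i. Sigma (A-{i}) (\<lambda>j. A-{i}-{j})) = distinct_triples A"
    by (auto simp: distinct_triples_def)
  finally show ?thesis by (simp add: case_prod_beta)
qed

lemma sum_distinct_quadruples:
  "finite A \<Longrightarrow> (\<Sum>i\<in>A. \<Sum>j\<in>A-{i}. \<Sum>k\<in>A-{i}-{j}. \<Sum>l\<in>A-{i}-{j}-{k}. f i j k l)
     = (\<Sum>(i,j,k,l)\<in>distinct_quadruples A. f i j k l)"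
proof -
  assume A: "finite A"
  have "(\<Sum>i\<in>A. \<Sum>j\<in>A-{i}. \<Sum>k\<in>A-{i}-{j}. \<Sum>l\<in>A-{i}-{j}-{k}. f i j k l)
     = (\<Sum>i\<in>A. \<Sum>j\<in>A-{i}. \<Sum>(k,l)\<in>Sigma (A-{i}-{j}) (\<lambda>k. A-{i}-{j}-{k}). f i j k l)"
    using A by (intro sum.cong refl, subst sum.Sigma) auto
  also have "\<dots> = (\<Sum>i\<in>A. \<Sum>(j,kl)\<in>Sigma (A-{i}) (\<lambda>j. Sigma (A-{i}-{j}) (\<lambda>k. A-{i}-{j}-{k})).
      case kl of (k,l) \<Rightarrow> f i j k l)"
    using A by (intro sum.cong refl, subst sum.Sigma) (auto simp: case_prod_beta)
  also have "\<dots> = (\<Sum>(i,jkl)\<in>Sigma A (\<lambda>i. Sigma (A-{i}) (\<lambda>j. Sigma (A-{i}-{j}) (\<lambda>k. A-{i}-{j}-{k}))).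
      case jkl of (j,k,l) \<Rightarrow> f i j k l)"
    using A by (subst sum.Sigma) (auto simp: case_prod_beta)
  also have "Sigma A (\<lambda>i. Sigma (A-{i}) (\<lambda>j. Sigma (A-{i}-{j}) (\<lambda>k. A-{i}-{j}-{k}))) = distinct_quadruples A"
    by (auto simp: distinct_quadruples_def)
  finally show ?thesis by (simp add: case_prod_beta)
qed

lemma sum_distinct_triples_rotate:
  "(\<Sum>(i,j,k)\<in>distinct_triples A. f i j k) = (\<Sum>(i,j,k)\<in>distinct_triples A. f j k i)"
  by (rule sum.reindex_bij_witness[where j="\<lambda>(i,j,k). (k,i,j)" and i="\<lambda>(i,j,k). (j,k,i)"])
     (auto simp: distinct_triples_def)

lemma sum_distinct_triples_swap23:
  "(\<Sum>(i,j,k)\<in>distinct_triples A. f i j k) = (\<Sum>(i,j,k)\<in>distinct_triples A. f i k j)"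
  by (rule sum.reindex_bij_witness[where i="\<lambda>(i,j,k). (i,k,j)" and j="\<lambda>(i,j,k). (i,k,j)"])
     (auto simp: distinct_triples_def)

lemma sum_distinct_quadruples_swap13:
  "(\<Sum>(i,j,k,l)\<in>distinct_quadruples A. f i j k l) = (\<Sum>(i,j,k,l)\<in>distinct_quadruples A. f k j i l)"
  by (rule sum.reindex_bij_witness[where i="\<lambda>(i,j,k,l). (k,j,i,l)" and j="\<lambda>(i,j,k,l). (k,j,i,l)"])
     (auto simp: distinct_quadruples_def)

lemma sum_distinct_quadruples_swap_pairs:
  "(\<Sum>(i,j,k,l)\<in>distinct_quadruples A. f i j k l) = (\<Sum>(i,j,k,l)\<in>distinct_quadruples A. f k l i j)"
  by (rule sum.reindex_bij_witness[where i="\<lambda>(i,j,k,l). (k,l,i,j)" and j="\<lambda>(i,j,k,l). (k,l,i,j)"])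
     (auto simp: distinct_quadruples_def)

lemma sum_distinct_quadruples_rotate234:
  "(\<Sum>(i,j,k,l)\<in>distinct_quadruples A. f i j k l) = (\<Sum>(i,j,k,l)\<in>distinct_quadruples A. f i l j k)"
  by (rule sum.reindex_bij_witness[where j="\<lambda>(i,j,k,l). (i,k,l,j)" and i="\<lambda>(i,j,k,l). (i,l,j,k)"])
     (auto simp: distinct_quadruples_def)

lemma sum_card2_subsets:
  fixes f :: "'a set \<Rightarrow> 'b::real_vector"
  assumes A: "finite A"
  shows "(\<Sum>P\<in>{P. P \<subseteq> A \<and> card P = 2}. f P) = (1/2::real) *\<^sub>R (\<Sum>i\<in>A. \<Sum>j\<in>A-{i}. f {i,j})"
proof -
  define T where "T = {P. P \<subseteq> A \<and> card P = 2}"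
  define S where "S = Sigma A (\<lambda>i. A - {i})"
  have fT: "finite T" unfolding T_def by (rule finite_subset[of _ "Pow A"]) (use A in auto)
  have fS: "finite S" unfolding S_def using A by auto
  have img: "(\<lambda>(i,j). {i,j}) ` S \<subseteq> T" unfolding S_def T_def by auto
  have "(\<Sum>i\<in>A. \<Sum>j\<in>A-{i}. f {i,j}) = (\<Sum>(i,j)\<in>S. f {i,j})"
    unfolding S_def using A by (subst sum.Sigma) auto
  also have "\<dots> = (\<Sum>P\<in>T. \<Sum>(i,j)\<in>{x\<in>S. (\<lambda>(i,j). {i,j}) x = P}. f {i,j})"
    using sum.group[OF fS fT img, of "\<lambda>(i,j). f {i,j}"] by simp
  also have "\<dots> = (\<Sum>P\<in>T. 2 *\<^sub>R f P)"
  proof (rule sum.cong[OF refl])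
    fix P assume "P \<in> T"
    then obtain u v where P: "P = {u,v}" "u \<noteq> v" "u \<in> A" "v \<in> A"
      unfolding T_def by (auto simp: card_2_iff)
    have "{x\<in>S. (\<lambda>(i,j). {i,j}) x = P} = {(u,v),(v,u)}"
      using P unfolding S_def by (auto simp: doubleton_eq_iff)
    then show "(\<Sum>(i,j)\<in>{x\<in>S. (\<lambda>(i,j). {i,j}) x = P}. f {i,j}) = 2 *\<^sub>R f P"
      using P by (simp add: insert_commute scaleR_2)
  qed
  finally show ?thesis unfolding T_def by (simp add: scaleR_sum_right)
qed

lemma sum_constant_Diff:
  fixes c :: "'b::real_vector"
  assumes "finite A" "B \<subseteq> A"
  shows "(\<Sum>_\<in>A-B. c) = (real (card A) - real (card B)) *\<^sub>R c"
  using assms by (simp add: sum_constant_scaleR card_Diff_subset card_mono finite_subset of_nat_diff)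

lemma sum_constant_Diff1:
  fixes c :: "'b::real_vector"
  assumes "finite A" "i \<in> A"
  shows "(\<Sum>_\<in>A-{i}. c) = (real (card A) - 1) *\<^sub>R c"
  using assms sum_constant_Diff[of A "{i}" c] by simp

lemma sum_constant_Diff2:
  fixes c :: "'b::real_vector"
  assumes "finite A" "i \<in> A" "j \<in> A" "i \<noteq> j"
  shows "(\<Sum>_\<in>A-{i}-{j}. c) = (real (card A) - 2) *\<^sub>R c"
  using assms sum_constant_Diff[of A "{i,j}" c] by (simp add: Diff_insert2 [symmetric] insert_commute)

lemma sum_constant_Diff3:
  fixes c :: "'b::real_vector"
  assumes "finite A" "i \<in> A" "j \<in> A" "k \<in> A" "i \<noteq> j" "i \<noteq> k" "j \<noteq> k"
  shows "(\<Sum>_\<in>A-{i}-{j}-{k}. c) = (real (card A) - 3) *\<^sub>R c"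
proof -
  have "A-{i}-{j}-{k} = A - {i,j,k}" by auto
  with assms sum_constant_Diff[of A "{i,j,k}" c] show ?thesis by simp
qed

lemma sum_sum_constant_Diff12:
  fixes c :: "'b::real_vector"
  assumes "finite A" "i \<in> A"
  shows "(\<Sum>j\<in>A-{i}. \<Sum>_\<in>A-{i}-{j}. c) = ((real (card A) - 1) * (real (card A) - 2)) *\<^sub>R c"
proof -
  have "(\<Sum>j\<in>A-{i}. \<Sum>_\<in>A-{i}-{j}. c) = (\<Sum>j\<in>A-{i}. (real (card A) - 2) *\<^sub>R c)"
    using assms by (intro sum.cong refl sum_constant_Diff2) auto
  with assms show ?thesis by (simp add: sum_constant_Diff1)
qed

lemma sum_sum_constant_Diff23:
  fixes c :: "'b::real_vector"
  assumes "finite A" "i \<in> A" "j \<in> A" "i \<noteq> j"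
  shows "(\<Sum>k\<in>A-{i}-{j}. \<Sum>_\<in>A-{i}-{j}-{k}. c) = ((real (card A) - 2) * (real (card A) - 3)) *\<^sub>R c"
proof -
  have "(\<Sum>k\<in>A-{i}-{j}. \<Sum>_\<in>A-{i}-{j}-{k}. c) = (\<Sum>k\<in>A-{i}-{j}. (real (card A) - 3) *\<^sub>R c)"
    using assms by (intro sum.cong refl sum_constant_Diff3) auto
  with assms show ?thesis by (simp add: sum_constant_Diff2)
qed

section \<open>Clifford relations and the decomposition of \<open>S_B\<close>\<close>

locale clifford_dunkl =
  fixes e :: "nat \<Rightarrow> 'v::real_vector \<Rightarrow> 'v" and U :: "nat set" and \<mu> :: "nat \<Rightarrow> real"
  assumes linear_e: "i \<in> U \<Longrightarrow> linear (e i)"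
    and clifford: "i \<in> U \<Longrightarrow> j \<in> U \<Longrightarrow> e i (e j v) + e j (e i v) = (if i = j then (-2::real) *\<^sub>R v else 0)"
begin

lemma linear_cop_e: "i \<in> U \<Longrightarrow> linear (cop e i)"
  using linear_cop linear_e by blast

lemma cop_square: "i \<in> U \<Longrightarrow> cop e i (cop e i F) = - F"
proof (rule ext)
  fix \<alpha> assume i: "i \<in> U"
  have "2 *\<^sub>R e i (e i (F \<alpha>)) = 2 *\<^sub>R (- F \<alpha>)"
    using clifford[OF i i, of "F \<alpha>"] by (simp add: scaleR_2)
  then have "e i (e i (F \<alpha>)) = - F \<alpha>"
    by (metis scaleR_cancel_left zero_neq_numeral)
  then show "cop e i (cop e i F) \<alpha> = (- F) \<alpha>"
    by (simp add: cop_def)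
qed

lemma cop_anticommute: "i \<in> U \<Longrightarrow> j \<in> U \<Longrightarrow> i \<noteq> j \<Longrightarrow> cop e j (cop e i F) = - cop e i (cop e j F)"
proof (rule ext)
  fix \<alpha> assume ij: "i \<in> U" "j \<in> U" "i \<noteq> j"
  have "e i (e j (F \<alpha>)) + e j (e i (F \<alpha>)) = 0" using clifford[OF ij(1,2)] ij(3) by simp
  then show "cop e j (cop e i F) \<alpha> = (- cop e i (cop e j F)) \<alpha>"
    by (simp add: cop_def eq_neg_iff_add_eq_0 add.commute)
qed

definition ang_term :: "nat \<Rightarrow> nat \<Rightarrow> 'v pol \<Rightarrow> 'v pol" where
  "ang_term i j G = cop e i (cop e j (xop i (Top \<mu> j G)))"

definition ang_part :: "nat set \<Rightarrow> 'v pol \<Rightarrow> 'v pol" where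
  "ang_part B G = (\<Sum>i\<in>B. \<Sum>j\<in>B-{i}. ang_term i j G)"

definition refl_part :: "nat set \<Rightarrow> 'v pol \<Rightarrow> 'v pol" where
  "refl_part B G = (\<Sum>i\<in>B. \<mu> i *\<^sub>R rop i G)"

lemma XA_eq_sum: "XA e B H = (\<Sum>i\<in>B. cop e i (xop i H))"
  by (rule ext) (simp add: XA_def)

lemma DA_eq_sum: "DA e \<mu> B H = (\<Sum>i\<in>B. cop e i (Top \<mu> i H))"
  by (rule ext) (simp add: DA_def)

lemma SA_eq_commutator: "SA e \<mu> B G = (1/2::real) *\<^sub>R (XA e B (DA e \<mu> B G) - DA e \<mu> B (XA e B G) - G)"
  by (rule ext) (simp add: SA_def)

lemma XA_DA_expand:
  assumes "B \<subseteq> U"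
  shows "XA e B (DA e \<mu> B G) = (\<Sum>i\<in>B. \<Sum>j\<in>B. cop e i (cop e j (xop i (Top \<mu> j G))))"
  unfolding XA_eq_sum DA_eq_sum using assms
  by (intro sum.cong refl)
     (auto simp: subset_iff linear_sum[OF linear_xop] linear_sum[OF linear_cop_e] cop_xop_commute linear_e)

lemma DA_XA_expand:
  assumes "B \<subseteq> U"
  shows "DA e \<mu> B (XA e B G) = (\<Sum>i\<in>B. \<Sum>j\<in>B. cop e j (cop e i (Top \<mu> j (xop i G))))"
  unfolding XA_eq_sum DA_eq_sum using assms
  by (subst sum.swap, intro sum.cong refl)
     (auto simp: subset_iff linear_sum[OF linear_Top] linear_sum[OF linear_cop_e] cop_Top_commute linear_e)

lemma XA_DA_commutator_summand:
  assumes "i \<in> U" "j \<in> U"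
  shows "cop e i (cop e j (xop i (Top \<mu> j G))) - cop e j (cop e i (Top \<mu> j (xop i G)))
      = (if i = j then G + (2 * \<mu> i) *\<^sub>R rop i G else 2 *\<^sub>R ang_term i j G)"
proof (cases "i = j")
  case True
  have "linear (cop e i \<circ> cop e i)"
    using assms linear_cop_e by (intro linear_compose) auto
  then have "cop e i (cop e i (xop i (Top \<mu> i G))) - cop e i (cop e i (Top \<mu> i (xop i G)))
      = cop e i (cop e i (xop i (Top \<mu> i G) - Top \<mu> i (xop i G)))"
    using linear_diff by fastforce
  also have "\<dots> = Top \<mu> i (xop i G) - xop i (Top \<mu> i G)"
    using assms by (simp add: cop_square)
  finally show ?thesis
    using True Top_xop_commutator by simp
next
  case False
  then have "cop e j (cop e i (Top \<mu> j (xop i G))) = - ang_term i j G"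
    using assms by (simp add: xop_Top_commute ang_term_def cop_anticommute[of i j])
  with False show ?thesis
    by (simp add: ang_term_def scaleR_2)
qed

lemma SA_decomp:
  assumes B: "finite B" "B \<subseteq> U"
  shows "SA e \<mu> B G = ang_part B G + ((real (card B) - 1)/2) *\<^sub>R G + refl_part B G"
proof -
  have "XA e B (DA e \<mu> B G) - DA e \<mu> B (XA e B G)
      = (\<Sum>i\<in>B. \<Sum>j\<in>B. if i = j then G + (2 * \<mu> i) *\<^sub>R rop i G else 2 *\<^sub>R ang_term i j G)"
    unfolding XA_DA_expand[OF B(2)] DA_XA_expand[OF B(2)] sum_subtractf[symmetric]
    using B(2) by (intro sum.cong refl XA_DA_commutator_summand) auto
  also have "\<dots> = (\<Sum>i\<in>B. G + (2 * \<mu> i) *\<^sub>R rop i G + (\<Sum>j\<in>B-{i}. 2 *\<^sub>R ang_term i j G))"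
    using B(1) by (intro sum.cong refl) (auto simp: sum.remove intro!: sum.cong)
  also have "\<dots> = real (card B) *\<^sub>R G + 2 *\<^sub>R refl_part B G + 2 *\<^sub>R ang_part B G"
    by (simp add: sum.distrib refl_part_def ang_part_def scaleR_sum_right sum_constant_scaleR)
  finally show ?thesis
    unfolding SA_eq_commutator by (simp add: algebra_simps diff_divide_distrib scaleR_diff_left)
qed

lemma SA_pair:
  assumes "i \<in> U" "j \<in> U" "i \<noteq> j"
  shows "SA e \<mu> {i,j} H = ang_term i j H + ang_term j i H + (1/2::real) *\<^sub>R H
    + \<mu> i *\<^sub>R rop i H + \<mu> j *\<^sub>R rop j H"
proof -
  have "{i,j} - {i} = {j}" "{i,j} - {j} = {i}" using assms by auto
  with assms show ?thesis by (subst SA_decomp) (auto simp: ang_part_def refl_part_def)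
qed

lemma linear_ang_term: "i \<in> U \<Longrightarrow> j \<in> U \<Longrightarrow> linear (ang_term i j)"
proof -
  assume "i \<in> U" "j \<in> U"
  moreover have "ang_term i j = cop e i \<circ> cop e j \<circ> xop i \<circ> Top \<mu> j"
    by (auto simp: ang_term_def fun_eq_iff)
  ultimately show ?thesis
    by (simp add: linear_compose linear_cop_e linear_xop linear_Top)
qed

lemma rop_ang_term_commute:
  "i \<in> U \<Longrightarrow> j \<in> U \<Longrightarrow> k \<noteq> i \<Longrightarrow> k \<noteq> j \<Longrightarrow> rop k (ang_term i j G) = ang_term i j (rop k G)"
  by (simp add: ang_term_def cop_rop_commute[symmetric] linear_e rop_xop_commute rop_Top_commute)

lemma ang_term_swap13:
  assumes U: "i \<in> U" "j \<in> U" "k \<in> U" "l \<in> U"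
    and d: "i \<noteq> j" "i \<noteq> k" "j \<noteq> k" "i \<noteq> l" "j \<noteq> l" "k \<noteq> l"
  shows "ang_term k j (ang_term i l G) = - ang_term i j (ang_term k l G)"
proof -
  define N where "N = cop e l (xop i (xop k (Top \<mu> j (Top \<mu> l G))))"
  have ijk: "ang_term i j (ang_term k l G) = cop e i (cop e j (cop e k N))"
    unfolding ang_term_def N_def using U d
    by (simp add: cop_Top_commute[symmetric] cop_xop_commute[symmetric] linear_e xop_Top_commute[symmetric])
  have kji: "ang_term k j (ang_term i l G) = cop e k (cop e j (cop e i N))"
    unfolding ang_term_def N_def using U d
    by (simp add: cop_Top_commute[symmetric] cop_xop_commute[symmetric] linear_e
        xop_Top_commute[symmetric] xop_commute)
  have neg: "cop e t (- H) = - cop e t H" if "t \<in> U" for t H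
    using that linear_cop_e linear_neg by blast
  have "cop e k (cop e j (cop e i N)) = - cop e k (cop e i (cop e j N))"
    using U d by (simp add: cop_anticommute[of i j] neg)
  also have "\<dots> = cop e i (cop e k (cop e j N))"
    using U d by (simp add: cop_anticommute[of i k] neg)
  also have "\<dots> = - cop e i (cop e j (cop e k N))"
    using U d by (simp add: cop_anticommute[of j k] neg)
  finally show ?thesis using ijk kji by simp
qed

lemma SA_commute:
  assumes L: "linear L"
    and "\<And>k H. k \<in> B \<Longrightarrow> L (cop e k H) = cop e k (L H)"
    and "\<And>k H. k \<in> B \<Longrightarrow> L (xop k H) = xop k (L H)"
    and "\<And>k H. k \<in> B \<Longrightarrow> L (Top \<mu> k H) = Top \<mu> k (L H)"
  shows "L (SA e \<mu> B G) = SA e \<mu> B (L G)"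
  using assms unfolding SA_eq_commutator XA_eq_sum DA_eq_sum
  by (simp add: linear_sum[OF L] linear_scale[OF L] linear_diff[OF L])

lemma GammaA_GammaA_Diff:
  assumes A: "finite A" "A \<subseteq> U" and P: "P \<subseteq> A"
  shows "GammaA e \<mu> P (GammaA e \<mu> (A - P) F) = SA e \<mu> P (SA e \<mu> (A - P) (rprod A F))"
proof -
  have "rprod P (SA e \<mu> (A - P) (rprod (A - P) F)) = SA e \<mu> (A - P) (rprod P (rprod (A - P) F))"
    using A by (intro SA_commute linear_rprod)
      (auto simp: cop_rprod_commute linear_e rprod_xop_commute rprod_Top_commute subset_iff)
  also have "rprod P (rprod (A - P) F) = rprod A F"
    using A P finite_subset by (subst rprod_union) (auto simp: Un_absorb1 Un_Diff_cancel)
  finally show ?thesis unfolding GammaA_def by simp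
qed

lemma GammaA_Diff_singleton:
  "finite A \<Longrightarrow> i \<in> A \<Longrightarrow> GammaA e \<mu> (A - {i}) F = SA e \<mu> (A - {i}) (rop i (rprod A F))"
  unfolding GammaA_def by (simp add: rprod_Diff_singleton)

end

section \<open>Expansion of both sides\<close>

context clifford_dunkl
begin

definition refl_ang_part :: "nat set \<Rightarrow> 'v pol \<Rightarrow> 'v pol" where
  "refl_ang_part A G = (\<Sum>k\<in>A. \<mu> k *\<^sub>R ang_part (A-{k}) (rop k G))"

definition refl_pair_part :: "nat set \<Rightarrow> 'v pol \<Rightarrow> 'v pol" where
  "refl_pair_part A G = (\<Sum>i\<in>A. \<Sum>k\<in>A-{i}. (\<mu> i * \<mu> k) *\<^sub>R rop i (rop k G))"

text \<open>The quadruple sum vanishes because swapping the first indices of the two angular terms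
  changes its sign.\<close>

lemma sum_ang_term_ang_part:
  assumes A: "finite A" "A \<subseteq> U"
  shows "(\<Sum>i\<in>A. \<Sum>j\<in>A-{i}. ang_term i j (ang_part (A-{i}-{j}) G)) = 0"
proof -
  define S where "S = (\<Sum>(i,j,k,l)\<in>distinct_quadruples A. ang_term i j (ang_term k l G))"
  have "(\<Sum>i\<in>A. \<Sum>j\<in>A-{i}. ang_term i j (ang_part (A-{i}-{j}) G))
      = (\<Sum>i\<in>A. \<Sum>j\<in>A-{i}. \<Sum>k\<in>A-{i}-{j}. \<Sum>l\<in>A-{i}-{j}-{k}. ang_term i j (ang_term k l G))"
    unfolding ang_part_def using A
    by (intro sum.cong refl) (auto simp: linear_sum[OF linear_ang_term] subset_iff)
  also have "\<dots> = S"
    unfolding S_def using A by (simp add: sum_distinct_quadruples)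
  finally have S: "(\<Sum>i\<in>A. \<Sum>j\<in>A-{i}. ang_term i j (ang_part (A-{i}-{j}) G)) = S" .
  have "S = (\<Sum>(i,j,k,l)\<in>distinct_quadruples A. ang_term k j (ang_term i l G))"
    unfolding S_def by (rule sum_distinct_quadruples_swap13)
  also have "\<dots> = (\<Sum>(i,j,k,l)\<in>distinct_quadruples A. - ang_term i j (ang_term k l G))"
    using A by (intro sum.cong refl) (auto simp: distinct_quadruples_def intro!: ang_term_swap13)
  also have "\<dots> = - S"
    unfolding S_def by (simp add: sum_negf case_prod_beta)
  finally have "2 *\<^sub>R S = 0"
    by (simp add: scaleR_2 eq_neg_iff_add_eq_0)
  with S show ?thesis by simp
qed

lemma sum_ang_term_refl_part:
  assumes A: "finite A" "A \<subseteq> U"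
  shows "(\<Sum>i\<in>A. \<Sum>j\<in>A-{i}. ang_term i j (refl_part (A-{i}-{j}) G)) = refl_ang_part A G"
proof -
  have "(\<Sum>i\<in>A. \<Sum>j\<in>A-{i}. ang_term i j (refl_part (A-{i}-{j}) G))
      = (\<Sum>i\<in>A. \<Sum>j\<in>A-{i}. \<Sum>k\<in>A-{i}-{j}. \<mu> k *\<^sub>R ang_term i j (rop k G))"
    unfolding refl_part_def using A
    by (intro sum.cong refl) (auto simp: linear_sum[OF linear_ang_term] linear_scale[OF linear_ang_term] subset_iff)
  also have "\<dots> = (\<Sum>(i,j,k)\<in>distinct_triples A. \<mu> k *\<^sub>R ang_term i j (rop k G))"
    using A by (simp add: sum_distinct_triples)
  also have "\<dots> = (\<Sum>(i,j,k)\<in>distinct_triples A. \<mu> i *\<^sub>R ang_term j k (rop i G))"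
    by (rule sum_distinct_triples_rotate)
  also have "\<dots> = (\<Sum>i\<in>A. \<Sum>j\<in>A-{i}. \<Sum>k\<in>A-{i}-{j}. \<mu> i *\<^sub>R ang_term j k (rop i G))"
    using A by (simp add: sum_distinct_triples)
  finally show ?thesis
    unfolding refl_ang_part_def ang_part_def by (simp add: scaleR_sum_right)
qed

lemma sum_ang_part_Diff_pair:
  assumes "finite A"
  shows "(\<Sum>i\<in>A. \<Sum>j\<in>A-{i}. ang_part (A-{i}-{j}) G)
    = ((real (card A) - 2) * (real (card A) - 3)) *\<^sub>R ang_part A G"
proof -
  have "(\<Sum>i\<in>A. \<Sum>j\<in>A-{i}. ang_part (A-{i}-{j}) G)
      = (\<Sum>(i,j,k,l)\<in>distinct_quadruples A. ang_term k l G)"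
    unfolding ang_part_def using assms by (simp add: sum_distinct_quadruples)
  also have "\<dots> = (\<Sum>(i,j,k,l)\<in>distinct_quadruples A. ang_term i j G)"
    by (rule sum_distinct_quadruples_swap_pairs)
  also have "\<dots> = (\<Sum>i\<in>A. \<Sum>j\<in>A-{i}. \<Sum>k\<in>A-{i}-{j}. \<Sum>l\<in>A-{i}-{j}-{k}. ang_term i j G)"
    using assms by (simp add: sum_distinct_quadruples)
  also have "\<dots> = (\<Sum>i\<in>A. \<Sum>j\<in>A-{i}. ((real (card A) - 2) * (real (card A) - 3)) *\<^sub>R ang_term i j G)"
    using assms by (intro sum.cong refl) (auto simp: sum_sum_constant_Diff23)
  finally show ?thesis
    unfolding ang_part_def by (simp add: scaleR_sum_right)
qed

lemma sum_refl_part_Diff_pair: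
  assumes "finite A"
  shows "(\<Sum>i\<in>A. \<Sum>j\<in>A-{i}. refl_part (A-{i}-{j}) G)
    = ((real (card A) - 1) * (real (card A) - 2)) *\<^sub>R refl_part A G"
proof -
  have "(\<Sum>i\<in>A. \<Sum>j\<in>A-{i}. refl_part (A-{i}-{j}) G)
      = (\<Sum>(i,j,k)\<in>distinct_triples A. \<mu> k *\<^sub>R rop k G)"
    unfolding refl_part_def using assms by (simp add: sum_distinct_triples)
  also have "\<dots> = (\<Sum>(i,j,k)\<in>distinct_triples A. \<mu> i *\<^sub>R rop i G)"
    by (rule sum_distinct_triples_rotate)
  also have "\<dots> = (\<Sum>i\<in>A. \<Sum>j\<in>A-{i}. \<Sum>k\<in>A-{i}-{j}. \<mu> i *\<^sub>R rop i G)"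
    using assms by (simp add: sum_distinct_triples)
  also have "\<dots> = (\<Sum>i\<in>A. ((real (card A) - 1) * (real (card A) - 2)) *\<^sub>R (\<mu> i *\<^sub>R rop i G))"
    using assms by (intro sum.cong refl) (auto simp: sum_sum_constant_Diff12)
  finally show ?thesis
    unfolding refl_part_def by (simp add: scaleR_sum_right)
qed

lemma sum_rop_ang_part_Diff_pair:
  assumes A: "finite A" "A \<subseteq> U"
  shows "(\<Sum>i\<in>A. \<Sum>j\<in>A-{i}. \<mu> i *\<^sub>R rop i (ang_part (A-{i}-{j}) G))
    = (real (card A) - 3) *\<^sub>R refl_ang_part A G"
proof -
  have "(\<Sum>i\<in>A. \<Sum>j\<in>A-{i}. \<mu> i *\<^sub>R rop i (ang_part (A-{i}-{j}) G))
      = (\<Sum>i\<in>A. \<Sum>j\<in>A-{i}. \<Sum>k\<in>A-{i}-{j}. \<Sum>l\<in>A-{i}-{j}-{k}. \<mu> i *\<^sub>R ang_term k l (rop i G))"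
    unfolding ang_part_def using A
    by (intro sum.cong refl)
      (auto simp: linear_sum[OF linear_rop] scaleR_sum_right subset_iff rop_ang_term_commute)
  also have "\<dots> = (\<Sum>(i,j,k,l)\<in>distinct_quadruples A. \<mu> i *\<^sub>R ang_term k l (rop i G))"
    using A by (simp add: sum_distinct_quadruples)
  also have "\<dots> = (\<Sum>(i,j,k,l)\<in>distinct_quadruples A. \<mu> i *\<^sub>R ang_term j k (rop i G))"
    by (rule sum_distinct_quadruples_rotate234)
  also have "\<dots> = (\<Sum>i\<in>A. \<Sum>j\<in>A-{i}. \<Sum>k\<in>A-{i}-{j}. \<Sum>l\<in>A-{i}-{j}-{k}. \<mu> i *\<^sub>R ang_term j k (rop i G))"
    using A by (simp add: sum_distinct_quadruples)
  also have "\<dots> = (\<Sum>i\<in>A. \<Sum>j\<in>A-{i}. \<Sum>k\<in>A-{i}-{j}. (real (card A) - 3) *\<^sub>R (\<mu> i *\<^sub>R ang_term j k (rop i G)))"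
    using A by (intro sum.cong refl) (auto simp: sum_constant_Diff3)
  finally show ?thesis
    unfolding refl_ang_part_def ang_part_def by (simp add: scaleR_sum_right)
qed

lemma sum_rop_refl_part_Diff_pair:
  assumes "finite A"
  shows "(\<Sum>i\<in>A. \<Sum>j\<in>A-{i}. \<mu> i *\<^sub>R rop i (refl_part (A-{i}-{j}) G))
    = (real (card A) - 2) *\<^sub>R refl_pair_part A G"
proof -
  have "(\<Sum>i\<in>A. \<Sum>j\<in>A-{i}. \<mu> i *\<^sub>R rop i (refl_part (A-{i}-{j}) G))
      = (\<Sum>i\<in>A. \<Sum>j\<in>A-{i}. \<Sum>k\<in>A-{i}-{j}. (\<mu> i * \<mu> k) *\<^sub>R rop i (rop k G))"
    unfolding refl_part_def
    by (simp add: linear_sum[OF linear_rop] linear_scale[OF linear_rop] scaleR_sum_right)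
  also have "\<dots> = (\<Sum>(i,j,k)\<in>distinct_triples A. (\<mu> i * \<mu> k) *\<^sub>R rop i (rop k G))"
    using assms by (simp add: sum_distinct_triples)
  also have "\<dots> = (\<Sum>(i,j,k)\<in>distinct_triples A. (\<mu> i * \<mu> j) *\<^sub>R rop i (rop j G))"
    by (rule sum_distinct_triples_swap23)
  also have "\<dots> = (\<Sum>i\<in>A. \<Sum>j\<in>A-{i}. \<Sum>k\<in>A-{i}-{j}. (\<mu> i * \<mu> j) *\<^sub>R rop i (rop j G))"
    using assms by (simp add: sum_distinct_triples)
  also have "\<dots> = (\<Sum>i\<in>A. \<Sum>j\<in>A-{i}. (real (card A) - 2) *\<^sub>R ((\<mu> i * \<mu> j) *\<^sub>R rop i (rop j G)))"
    using assms by (intro sum.cong refl) (auto simp: sum_constant_Diff2)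
  finally show ?thesis
    unfolding refl_pair_part_def by (simp add: scaleR_sum_right)
qed

lemma SA_Diff_pair:
  assumes A: "finite A" "A \<subseteq> U" and ij: "i \<in> A" "j \<in> A" "i \<noteq> j"
  shows "SA e \<mu> (A-{i,j}) G
    = ang_part (A-{i}-{j}) G + ((real (card A) - 3)/2) *\<^sub>R G + refl_part (A-{i}-{j}) G"
proof -
  have "A-{i,j} = A-{i}-{j}" by auto
  moreover have "real (card (A-{i}-{j})) = real (card A) - 2"
    using sum_constant_Diff2[OF A(1) ij, of "1::real"] by simp
  ultimately show ?thesis
    using A SA_decomp[of "A-{i}-{j}" G] by (auto simp: diff_divide_distrib)
qed

lemma SA_Diff_singleton:
  assumes A: "finite A" "A \<subseteq> U" and i: "i \<in> A"
  shows "SA e \<mu> (A-{i}) G = ang_part (A-{i}) G + ((real (card A) - 2)/2) *\<^sub>R G + refl_part (A-{i}) G"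
proof -
  have "real (card (A-{i})) = real (card A) - 1"
    using sum_constant_Diff1[OF A(1) i, of "1::real"] by simp
  then show ?thesis
    using A SA_decomp[of "A-{i}" G] by (auto simp: diff_divide_distrib)
qed

text \<open>Coordinates with respect to the five operators into which every term of the
  identity expands.\<close>

definition lincomb :: "nat set \<Rightarrow> 'v pol \<Rightarrow> real \<Rightarrow> real \<Rightarrow> real \<Rightarrow> real \<Rightarrow> real \<Rightarrow> 'v pol" where
  "lincomb A G p q r s t = p *\<^sub>R ang_part A G + q *\<^sub>R G + r *\<^sub>R refl_part A G
     + s *\<^sub>R refl_ang_part A G + t *\<^sub>R refl_pair_part A G"

lemma lincomb_add:
  "lincomb A G p q r s t + lincomb A G p' q' r' s' t' = lincomb A G (p+p') (q+q') (r+r') (s+s') (t+t')"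
  unfolding lincomb_def by (simp add: algebra_simps)

lemma lincomb_diff:
  "lincomb A G p q r s t - lincomb A G p' q' r' s' t' = lincomb A G (p-p') (q-q') (r-r') (s-s') (t-t')"
  unfolding lincomb_def by (simp add: algebra_simps)

lemma scaleR_lincomb: "c *\<^sub>R lincomb A G p q r s t = lincomb A G (c*p) (c*q) (c*r) (c*s) (c*t)"
  unfolding lincomb_def by (simp add: scaleR_add_right)

lemma SA_lincomb:
  "finite A \<Longrightarrow> A \<subseteq> U \<Longrightarrow> SA e \<mu> A G = lincomb A G 1 ((real (card A) - 1)/2) 1 0 0"
  unfolding lincomb_def by (simp add: SA_decomp)

lemma sum_ang_term_SA_Diff_pair:
  assumes A: "finite A" "A \<subseteq> U"
  shows "(\<Sum>i\<in>A. \<Sum>j\<in>A-{i}. ang_term i j (SA e \<mu> (A-{i,j}) G))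
    = lincomb A G ((real (card A) - 3)/2) 0 0 1 0"
proof -
  have "(\<Sum>i\<in>A. \<Sum>j\<in>A-{i}. ang_term i j (SA e \<mu> (A-{i,j}) G))
      = (\<Sum>i\<in>A. \<Sum>j\<in>A-{i}. ang_term i j (ang_part (A-{i}-{j}) G)
          + ((real (card A) - 3)/2) *\<^sub>R ang_term i j G + ang_term i j (refl_part (A-{i}-{j}) G))"
    using A by (intro sum.cong refl)
      (auto simp: SA_Diff_pair linear_add[OF linear_ang_term] linear_scale[OF linear_ang_term] subset_iff)
  also have "\<dots> = (\<Sum>i\<in>A. \<Sum>j\<in>A-{i}. ang_term i j (ang_part (A-{i}-{j}) G))
      + ((real (card A) - 3)/2) *\<^sub>R (\<Sum>i\<in>A. \<Sum>j\<in>A-{i}. ang_term i j G)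
      + (\<Sum>i\<in>A. \<Sum>j\<in>A-{i}. ang_term i j (refl_part (A-{i}-{j}) G))"
    by (simp only: sum.distrib scaleR_sum_right)
  also have "\<dots> = ((real (card A) - 3)/2) *\<^sub>R ang_part A G + refl_ang_part A G"
    unfolding sum_ang_term_ang_part[OF A] sum_ang_term_refl_part[OF A] ang_part_def[of A, symmetric]
    by simp
  finally show ?thesis unfolding lincomb_def by simp
qed

lemma sum_SA_Diff_pair:
  assumes A: "finite A" "A \<subseteq> U"
  shows "(\<Sum>i\<in>A. \<Sum>j\<in>A-{i}. SA e \<mu> (A-{i,j}) G)
    = lincomb A G ((real (card A) - 2) * (real (card A) - 3))
        (real (card A) * (real (card A) - 1) * (real (card A) - 3) / 2)
        ((real (card A) - 1) * (real (card A) - 2)) 0 0"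
proof -
  have "(\<Sum>i\<in>A. \<Sum>j\<in>A-{i}. SA e \<mu> (A-{i,j}) G)
      = (\<Sum>i\<in>A. \<Sum>j\<in>A-{i}. ang_part (A-{i}-{j}) G + ((real (card A) - 3)/2) *\<^sub>R G
          + refl_part (A-{i}-{j}) G)"
    using A by (intro sum.cong refl) (auto simp: SA_Diff_pair)
  also have "\<dots> = ((real (card A) - 2) * (real (card A) - 3)) *\<^sub>R ang_part A G
      + (\<Sum>i\<in>A. (real (card A) - 1) *\<^sub>R (((real (card A) - 3)/2) *\<^sub>R G))
      + ((real (card A) - 1) * (real (card A) - 2)) *\<^sub>R refl_part A G"
    using A by (simp add: sum.distrib sum_ang_part_Diff_pair sum_refl_part_Diff_pair sum_constant_Diff1)
  finally show ?thesis
    unfolding lincomb_def by (simp add: sum_constant_scaleR algebra_simps)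
qed

lemma sum_rop_SA_Diff_pair:
  assumes A: "finite A" "A \<subseteq> U"
  shows "(\<Sum>i\<in>A. \<Sum>j\<in>A-{i}. \<mu> i *\<^sub>R rop i (SA e \<mu> (A-{i,j}) G))
    = lincomb A G 0 0 ((real (card A) - 3)/2 * (real (card A) - 1)) (real (card A) - 3) (real (card A) - 2)"
proof -
  have "(\<Sum>i\<in>A. \<Sum>j\<in>A-{i}. \<mu> i *\<^sub>R rop i (SA e \<mu> (A-{i,j}) G))
      = (\<Sum>i\<in>A. \<Sum>j\<in>A-{i}. \<mu> i *\<^sub>R rop i (ang_part (A-{i}-{j}) G)
          + ((real (card A) - 3)/2) *\<^sub>R (\<mu> i *\<^sub>R rop i G) + \<mu> i *\<^sub>R rop i (refl_part (A-{i}-{j}) G))"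
    using A by (intro sum.cong refl)
      (auto simp: SA_Diff_pair linear_add[OF linear_rop] linear_scale[OF linear_rop]
        scaleR_add_right scaleR_left_commute)
  also have "\<dots> = (real (card A) - 3) *\<^sub>R refl_ang_part A G
      + (\<Sum>i\<in>A. (real (card A) - 1) *\<^sub>R (((real (card A) - 3)/2) *\<^sub>R (\<mu> i *\<^sub>R rop i G)))
      + (real (card A) - 2) *\<^sub>R refl_pair_part A G"
    using A by (simp add: sum.distrib sum_rop_ang_part_Diff_pair sum_rop_refl_part_Diff_pair
        sum_constant_Diff1)
  finally show ?thesis
    unfolding lincomb_def refl_part_def by (simp add: scaleR_sum_right algebra_simps)
qed

lemma sum_SA_Diff_singleton_rop:
  assumes A: "finite A" "A \<subseteq> U"
  shows "(\<Sum>i\<in>A. \<mu> i *\<^sub>R SA e \<mu> (A-{i}) (rop i G)) = lincomb A G 0 0 ((real (card A) - 2)/2) 1 1"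
proof -
  have "(\<Sum>i\<in>A. \<mu> i *\<^sub>R SA e \<mu> (A-{i}) (rop i G))
      = (\<Sum>i\<in>A. \<mu> i *\<^sub>R ang_part (A-{i}) (rop i G) + ((real (card A) - 2)/2) *\<^sub>R (\<mu> i *\<^sub>R rop i G)
          + (\<Sum>k\<in>A-{i}. (\<mu> i * \<mu> k) *\<^sub>R rop i (rop k G)))"
    using A by (intro sum.cong refl)
      (auto simp: SA_Diff_singleton refl_part_def scaleR_add_right scaleR_sum_right rop_commute
        scaleR_left_commute)
  then show ?thesis
    unfolding lincomb_def refl_ang_part_def refl_pair_part_def refl_part_def
    by (simp add: sum.distrib scaleR_sum_right)
qed

lemma sum_card2_subsets_SA_SA:
  assumes A: "finite A" "A \<subseteq> U"
  shows "(\<Sum>P\<in>{P. P \<subseteq> A \<and> card P = 2}. SA e \<mu> P (SA e \<mu> (A-P) G))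
    = (\<Sum>i\<in>A. \<Sum>j\<in>A-{i}. ang_term i j (SA e \<mu> (A-{i,j}) G))
      + (1/4::real) *\<^sub>R (\<Sum>i\<in>A. \<Sum>j\<in>A-{i}. SA e \<mu> (A-{i,j}) G)
      + (\<Sum>i\<in>A. \<Sum>j\<in>A-{i}. \<mu> i *\<^sub>R rop i (SA e \<mu> (A-{i,j}) G))"
proof -
  define H where "H i j = SA e \<mu> (A-{i,j}) G" for i j
  have H_sym: "H j i = H i j" for i j
    unfolding H_def by (simp add: insert_commute)
  have "(\<Sum>P\<in>{P. P \<subseteq> A \<and> card P = 2}. SA e \<mu> P (SA e \<mu> (A-P) G))
      = (1/2::real) *\<^sub>R (\<Sum>i\<in>A. \<Sum>j\<in>A-{i}. SA e \<mu> {i,j} (H i j))"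
    unfolding H_def by (rule sum_card2_subsets[OF A(1)])
  also have "\<dots> = (1/2::real) *\<^sub>R (\<Sum>i\<in>A. \<Sum>j\<in>A-{i}. ang_term i j (H i j) + ang_term j i (H j i)
      + (1/2::real) *\<^sub>R H i j + \<mu> i *\<^sub>R rop i (H i j) + \<mu> j *\<^sub>R rop j (H j i))"
    using A by (auto simp: H_sym subset_iff intro!: sum.cong SA_pair)
  also have "\<dots> = (1/2::real) *\<^sub>R (2 *\<^sub>R (\<Sum>i\<in>A. \<Sum>j\<in>A-{i}. ang_term i j (H i j))
      + (1/2::real) *\<^sub>R (\<Sum>i\<in>A. \<Sum>j\<in>A-{i}. H i j) + 2 *\<^sub>R (\<Sum>i\<in>A. \<Sum>j\<in>A-{i}. \<mu> i *\<^sub>R rop i (H i j)))"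
    using sum_distinct_pairs_swap[OF A(1), of "\<lambda>i j. ang_term i j (H i j)", symmetric]
      sum_distinct_pairs_swap[OF A(1), of "\<lambda>i j. \<mu> i *\<^sub>R rop i (H i j)", symmetric]
    by (simp only: sum.distrib scaleR_sum_right scaleR_2 add.assoc)
  finally show ?thesis
    unfolding H_def by (simp add: scaleR_add_right)
qed

theorem SA_pair_sum_identity:
  assumes A: "finite A" "A \<subseteq> U"
  shows "(\<Sum>P\<in>{P. P \<subseteq> A \<and> card P = 2}. SA e \<mu> P (SA e \<mu> (A-P) G))
     - (real (card A) - 2) *\<^sub>R (\<Sum>i\<in>A. \<mu> i *\<^sub>R SA e \<mu> (A-{i}) (rop i G))
     = (real (card A) * (real (card A) - 3) / 4) *\<^sub>R SA e \<mu> A G"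
  unfolding sum_card2_subsets_SA_SA[OF A] sum_ang_term_SA_Diff_pair[OF A] sum_SA_Diff_pair[OF A]
    sum_rop_SA_Diff_pair[OF A] sum_SA_Diff_singleton_rop[OF A] SA_lincomb[OF A]
    lincomb_add scaleR_lincomb lincomb_diff
  by (rule cong[OF cong[OF cong[OF cong[OF arg_cong[where f = "lincomb A G"]]]]]) (simp_all add: field_simps)

end

theorem lemma12:
  fixes n :: nat and \<mu> :: "nat \<Rightarrow> real" and e :: "nat \<Rightarrow> 'v::real_vector \<Rightarrow> 'v"
    and A :: "nat set" and F :: "'v pol"
  assumes "n \<ge> 1"
    and "\<forall>i\<in>{1..n}. \<mu> i > 0"
    and "\<forall>i\<in>{1..n}. linear (e i)"
    and "\<forall>i\<in>{1..n}. \<forall>j\<in>{1..n}. \<forall>v.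
           e i (e j v) + e j (e i v) = (if i = j then (-2::real) *\<^sub>R v else 0)"
    and "A \<subseteq> {1..n}"
    and "is_pol n F"
  shows "CA e \<mu> A F = (\<lambda>\<alpha>. (real (card A) * (real (card A) - 3) / 4) *\<^sub>R GammaA e \<mu> A F \<alpha>)"
proof -
  interpret clifford_dunkl e "{1..n}" \<mu>
    using assms(3,4) by (intro clifford_dunkl.intro) auto
  have A: "finite A" "A \<subseteq> {1..n}"
    using assms(5) finite_subset by auto
  have pairs: "(\<Sum>P\<in>{P. P \<subseteq> A \<and> card P = 2}. GammaA e \<mu> P (GammaA e \<mu> (A-P) F))
      = (\<Sum>P\<in>{P. P \<subseteq> A \<and> card P = 2}. SA e \<mu> P (SA e \<mu> (A-P) (rprod A F)))"
    using A by (intro sum.cong refl GammaA_GammaA_Diff) auto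
  have singletons: "(\<Sum>i\<in>A. \<mu> i *\<^sub>R GammaA e \<mu> (A-{i}) F)
      = (\<Sum>i\<in>A. \<mu> i *\<^sub>R SA e \<mu> (A-{i}) (rop i (rprod A F)))"
    using A by (intro sum.cong refl) (simp add: GammaA_Diff_singleton)
  have "CA e \<mu> A F = (\<Sum>P\<in>{P. P \<subseteq> A \<and> card P = 2}. SA e \<mu> P (SA e \<mu> (A-P) (rprod A F)))
      - (real (card A) - 2) *\<^sub>R (\<Sum>i\<in>A. \<mu> i *\<^sub>R SA e \<mu> (A-{i}) (rop i (rprod A F)))"
    unfolding pairs[symmetric] singletons[symmetric] by (simp add: CA_def fun_eq_iff)
  also have "\<dots> = (real (card A) * (real (card A) - 3) / 4) *\<^sub>R SA e \<mu> A (rprod A F)"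
    by (rule SA_pair_sum_identity[OF A])
  finally show ?thesis
    by (simp add: GammaA_def fun_eq_iff)
qed

end
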